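(* (a) If $\mathrm{GC}(l,0)$ is a Goldberg-Coxeter operation whose vertex $v_0$ has colour 2, then $l=3k$ for a positive integer $k$, and $\mathrm{GC}(3k,0)=\mathrm{GC}(k,k)\circ\mathrm{GC}(1,1)$. (b) For every positive integer $l$, $\mathrm{GC}(l,l)=\mathrm{GC}(l,0)\circ\mathrm{GC}(1,1)$.
   Context: Let $T_H$ be the regular hexagonal tiling of the plane and $B_{T_H}$ its barycentric subdivision (a vertex added in every face and on every edge, each face-vertex joined to the vertices and edge-vertices on its face boundary; original vertices coloured 0, edge-vertices 1, face-vertices 2; the triangles are chambers). Coordinates: $(0,0)$ is the centre of a face $f$, $(0,1)$ is a vertex of $f$ and $(1,0)$ is the vertex of $f$ preceding $(0,1)$ clockwise on its boundary; integer point $(x,y)$ is a face centre iff $x-y\equiv0\pmod3$ and a vertex otherwise. For $l\ge1$, $m\in\{0,l\}$, $\mathrm{GC}(l,m)$ is the coloured plane triangulated triangle cut out of $B_{T_H}$ with corners $v_0=(l,m)$, $v_1=(\frac{l-m}{2},\frac{l+2m}{2})$, $v_2=(0,0)$. Such an operation $O$ is applied to a map $P$ by gluing into every chamber of the barycentric subdivision $B_P$ a copy of $O$ or its mirror image (adjacent chambers receiving mirror images), identifying $v_i$ with the colour-$i$ vertex of the chamber and the boundary path between $v_i$ and $v_j$ with the chamber edge between the colour-$i$ and colour-$j$ vertices, yielding $B_{O(P)}$. The composite $O\circ O'$ is the operation $P\mapsto O(O'(P))$; as a coloured triangle it is obtained by gluing a copy of $O$ or its mirror image into every chamber of $O'$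 in the same way. Equality of operations means equality of these coloured triangles with marked corners (up to isomorphism). *)

theory Defs
  imports Complex_Main
begin

text \<open>A coloured triangle: a set of chambers (triangles, given as vertex sets),
a colouring of the vertices by 0,1,2, and the three marked corners
corner 0 = v0, corner 1 = v1, corner 2 = v2.\<close>

record 'a ctri =
  chambers :: "'a set set"
  colour   :: "'a \<Rightarrow> nat"
  corner   :: "nat \<Rightarrow> 'a"

text \<open>An operation additionally records, for each vertex p, its carrier: the set of
corner indices k such that p has positive barycentric coordinate w.r.t. corner k.
So carrier v_i = {i}, a vertex in the interior of the boundary path between v_i and v_j
has carrier {i,j}, and an inner vertex has carrier {0,1,2}.  This is what is needed to
glue copies of the operation into chambers.\<close>

record 'a oper = "'a ctri" +
  carrier :: "'a \<Rightarrow> nat set"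

definition verts :: "('a,'z) ctri_scheme \<Rightarrow> 'a set" where
  "verts T = \<Union>(chambers T)"

definition ctri_iso :: "('a,'x) ctri_scheme \<Rightarrow> ('b,'y) ctri_scheme \<Rightarrow> bool" where
  "ctri_iso A B \<longleftrightarrow> (\<exists>f. bij_betw f (verts A) (verts B)
      \<and> (\<lambda>C. f ` C) ` chambers A = chambers B
      \<and> (\<forall>x\<in>verts A. colour B (f x) = colour A x)
      \<and> (\<forall>k<3. f (corner A k) = corner B k))"

text \<open>Copy of O in chamber C of O': pairs (C,p).  Corner v_k of O is identified with the
colour-k vertex of C, the boundary path of O between v_i and v_j with the edge of C between
its colour-i and colour-j vertices.  Hence (C,p) and (C',q) are identified iff p = q and
C, C' have the same vertices of the colours in the carrier of p.\<close>

definition glue_rel :: "('p,'z) oper_scheme \<Rightarrow> ('q,'y) ctri_scheme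
     \<Rightarrow> 'q set \<times> 'p \<Rightarrow> 'q set \<times> 'p \<Rightarrow> bool" where
  "glue_rel Op Q a b \<longleftrightarrow> snd a = snd b \<and>
     {x \<in> fst a. colour Q x \<in> carrier Op (snd a)} = {x \<in> fst b. colour Q x \<in> carrier Op (snd a)}"

definition glue_cls :: "('p,'z) oper_scheme \<Rightarrow> ('q,'y) ctri_scheme
     \<Rightarrow> 'q set \<Rightarrow> 'p \<Rightarrow> ('q set \<times> 'p) set" where
  "glue_cls Op Q C p = {(C',q). C' \<in> chambers Q \<and> q \<in> verts Op \<and> glue_rel Op Q (C,p) (C',q)}"

text \<open>The composite Op \<circ> Q (the operation P \<mapsto> Op(Q(P))).  Its vertices are the classes;
the colour of a vertex is the colour in Op; the corner k is the point where the corner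
w_k of Q lies, i.e. the vertex v_c of a copy of Op in a chamber containing w_k,
with c the colour of w_k in Q.\<close>

definition gc_comp :: "('p,'z) oper_scheme \<Rightarrow> ('q,'y) ctri_scheme
     \<Rightarrow> ('q set \<times> 'p) set ctri" where
  "gc_comp Op Q =
     \<lparr> chambers = {glue_cls Op Q C ` T | C T. C \<in> chambers Q \<and> T \<in> chambers Op},
       colour = (\<lambda>x. colour Op (snd (SOME z. z \<in> x))),
       corner = (\<lambda>k. glue_cls Op Q (SOME C. C \<in> chambers Q \<and> corner Q k \<in> C)
                         (corner Op (colour Q (corner Q k)))) \<rparr>"

text \<open>Points are given in the (skew, 60 degree) coordinates of the paper as pairs of reals.  Edge vertices are midpoints
of two neighbouring hexagon vertices.\<close>

definition latt :: "real \<times> real \<Rightarrow> bool" where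
  "latt p \<longleftrightarrow> fst p \<in> \<int> \<and> snd p \<in> \<int>"

definition face_ctr :: "real \<times> real \<Rightarrow> bool" where
  "face_ctr p \<longleftrightarrow> latt p \<and> (\<exists>k::int. fst p - snd p = 3 * of_int k)"

definition hex_vert :: "real \<times> real \<Rightarrow> bool" where
  "hex_vert p \<longleftrightarrow> latt p \<and> \<not> face_ctr p"

definition nbr :: "real \<times> real \<Rightarrow> real \<times> real \<Rightarrow> bool" where
  "nbr p q \<longleftrightarrow> latt p \<and> latt q \<and>
     (fst q - fst p, snd q - snd p) \<in> {(1,0),(0,1),(-1,1),(-1,0),(0,-1),(1,-1)}"

definition midpt :: "real \<times> real \<Rightarrow> real \<times> real \<Rightarrow> real \<times> real" where
  "midpt u w = ((fst u + fst w) / 2, (snd u + snd w) / 2)"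

text \<open>Chambers of B(T_H): every lattice triangle {c,u,w} (c a face centre, uw a hexagon
edge) is split into the chambers {c,u,m} and {c,w,m}, m the midpoint of uw.\<close>
definition BH_chambers :: "(real \<times> real) set set" where
  "BH_chambers = {{c, u, midpt u w} | c u w.
      face_ctr c \<and> hex_vert u \<and> hex_vert w \<and> nbr c u \<and> nbr c w \<and> nbr u w}"

definition BH_colour :: "real \<times> real \<Rightarrow> nat" where
  "BH_colour p = (if face_ctr p then 2 else if hex_vert p then 0 else 1)"

definition comb :: "real \<Rightarrow> real \<Rightarrow> real \<Rightarrow> real \<times> real \<Rightarrow> real \<times> real \<Rightarrow> real \<times> real
                    \<Rightarrow> real \<times> real" where
  "comb \<alpha> \<beta> \<gamma> a b c = (\<alpha> * fst a + \<beta> * fst b + \<gamma> * fst c, \<alpha> * snd a + \<beta> * snd b + \<gamma> * snd c)"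

definition bary :: "real \<times> real \<Rightarrow> real \<times> real \<Rightarrow> real \<times> real \<Rightarrow> real \<times> real \<Rightarrow> real list \<Rightarrow> bool" where
  "bary a b c p cs \<longleftrightarrow> (\<exists>\<alpha> \<beta> \<gamma>. cs = [\<alpha>, \<beta>, \<gamma>] \<and> \<alpha> \<ge> 0 \<and> \<beta> \<ge> 0 \<and> \<gamma> \<ge> 0 \<and>
      \<alpha> + \<beta> + \<gamma> = 1 \<and> p = comb \<alpha> \<beta> \<gamma> a b c)"

definition in_tri :: "real \<times> real \<Rightarrow> real \<times> real \<Rightarrow> real \<times> real \<Rightarrow> real \<times> real \<Rightarrow> bool" where
  "in_tri a b c p \<longleftrightarrow> (\<exists>cs. bary a b c p cs)"

definition GC_corner :: "nat \<Rightarrow> nat \<Rightarrow> nat \<Rightarrow> real \<times> real" where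
  "GC_corner l m k =
     (if k = 0 then (real l, real m)
      else if k = 1 then ((real l - real m) / 2, (real l + 2 * real m) / 2)
      else (0, 0))"

definition GC :: "nat \<Rightarrow> nat \<Rightarrow> (real \<times> real) oper" where
  "GC l m =
     (let a = GC_corner l m 0; b = GC_corner l m 1; c = GC_corner l m 2 in
      \<lparr> chambers = {C \<in> BH_chambers. \<forall>p\<in>C. in_tri a b c p},
        colour = BH_colour,
        corner = GC_corner l m,
        carrier = (\<lambda>p. {k. k < 3 \<and> (\<exists>cs. bary a b c p cs \<and> cs ! k > 0)}) \<rparr>)"

end

(* GC(l,l) is cut by the lines x + y = l and y = l, and GC(3k,0) by the lines 2x + y = 3k and
   x + 2y = 3k, into three triangles. These lines are mirrors of B(T_H), so no chamber crosses
   them, and each triangle is the image of GC(l,0), resp. GC(k,k), under an automorphism of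
   B(T_H). Two of the triangles share a side exactly when the corresponding chambers of GC(1,1)
   share the edge along which the gluing rule identifies their copies, so the three images
   assemble to the composite operation. Finally the corner v0 = (l,0) of GC(l,0) has colour 2
   only if it is a face centre, i.e. only if 3 divides l. *)

theory Submission
  imports Defs
begin

definition hex_dirs :: "(real \<times> real) set" where
  "hex_dirs = {(1,0), (0,1), (-1,1), (-1,0), (0,-1), (1,-1)}"

lemma nbr_iff_hex_dirs: "nbr p q \<longleftrightarrow> latt p \<and> latt q \<and> (fst q - fst p, snd q - snd p) \<in> hex_dirs"
  unfolding nbr_def hex_dirs_def ..

lemma latt_iff: "latt p \<longleftrightarrow> (\<exists>i j. p = (of_int i, of_int j))"
  unfolding latt_def by (cases p) (auto elim!: Ints_cases)

lemma face_ctr_of_int_iff: "face_ctr (of_int i, of_int j) \<longleftrightarrow> 3 dvd (i - j)"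
proof -
  have "(\<exists>k. real_of_int i - of_int j = 3 * of_int k) \<longleftrightarrow> (\<exists>k. i - j = 3 * k)"
    by (metis of_int_diff of_int_eq_iff of_int_mult of_int_numeral)
  then show ?thesis by (simp add: face_ctr_def latt_def dvd_def)
qed

lemma face_ctr_iff: "face_ctr p \<longleftrightarrow> (\<exists>i j. p = (of_int i, of_int j) \<and> 3 dvd (i - j))"
  by (metis face_ctr_def face_ctr_of_int_iff latt_iff)

lemma of_int_pair_in_hex_dirs:
  "(of_int a, of_int b) \<in> hex_dirs \<longleftrightarrow> (a, b) \<in> {(1,0), (0,1), (-1,1), (-1,0), (0,-1), (1,-1)}"
proof -
  have "of_int x = (-1::real) \<longleftrightarrow> x = -1" for x
    by (metis of_int_eq_iff of_int_minus of_int_1)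
  then show ?thesis unfolding hex_dirs_def by auto
qed

lemma nbr_of_intE:
  assumes "nbr p q"
  obtains i j i' j' :: int where "p = (of_int i, of_int j)" "q = (of_int i', of_int j')"
    and "(i' - i, j' - j) \<in> {(1,0), (0,1), (-1,1), (-1,0), (0,-1), (1,-1)}"
proof -
  obtain i j i' j' where p: "p = (of_int i, of_int j)" and q: "q = (of_int i', of_int j')"
    using assms unfolding nbr_def latt_iff by blast
  have "(of_int (i' - i), of_int (j' - j)) \<in> hex_dirs"
    using assms unfolding nbr_iff_hex_dirs p q by simp
  then show thesis
    using that p q unfolding of_int_pair_in_hex_dirs by blast
qed

lemma not_latt_midpt:
  assumes "nbr u w" shows "\<not> latt (midpt u w)"
proof
  obtain i j i' j' where u: "u = (of_int i, of_int j)" and w: "w = (of_int i', of_int j')"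
    and dir: "(i' - i, j' - j) \<in> {(1,0), (0,1), (-1,1), (-1,0), (0,-1), (1,-1)}"
    using assms by (rule nbr_of_intE)
  assume "latt (midpt u w)"
  then obtain m n where "(of_int i + of_int i') / 2 = (of_int m :: real)" "(of_int j + of_int j') / 2 = (of_int n :: real)"
    unfolding latt_iff midpt_def u w by auto
  then have "i + i' = 2 * m" "j + j' = 2 * n"
    by (simp_all add: field_simps flip: of_int_add of_int_mult of_int_eq_iff)
  then show False
    using dir by auto presburger+
qed

lemma hex_dirs_uminus: "(x, y) \<in> hex_dirs \<Longrightarrow> (- x, - y) \<in> hex_dirs"
  unfolding hex_dirs_def by auto

section \<open>Automorphisms of the barycentric subdivision\<close>

definition BH_hom :: "(real \<times> real \<Rightarrow> real \<times> real) \<Rightarrow> bool" where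
  "BH_hom f \<longleftrightarrow> (\<forall>p. latt p \<longrightarrow> latt (f p)) \<and> (\<forall>p. face_ctr p \<longrightarrow> face_ctr (f p))
     \<and> (\<forall>p q. nbr p q \<longrightarrow> nbr (f p) (f q)) \<and> (\<forall>u w. f (midpt u w) = midpt (f u) (f w))"

definition BH_aut :: "(real \<times> real \<Rightarrow> real \<times> real) \<Rightarrow> (real \<times> real \<Rightarrow> real \<times> real) \<Rightarrow> bool" where
  "BH_aut f g \<longleftrightarrow> BH_hom f \<and> BH_hom g \<and> (\<forall>p. g (f p) = p) \<and> (\<forall>p. f (g p) = p)"

lemma BH_aut_sym: "BH_aut f g \<Longrightarrow> BH_aut g f"
  unfolding BH_aut_def by blast

lemma BH_aut_image_image: "BH_aut f g \<Longrightarrow> f ` g ` D = D"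
  unfolding BH_aut_def by (simp add: image_image del: split_paired_All)

lemma BH_aut_face_ctr_iff: "BH_aut f g \<Longrightarrow> face_ctr (f p) \<longleftrightarrow> face_ctr p"
  unfolding BH_aut_def BH_hom_def by metis

lemma BH_aut_latt_iff: "BH_aut f g \<Longrightarrow> latt (f p) \<longleftrightarrow> latt p"
  unfolding BH_aut_def BH_hom_def by metis

lemma BH_aut_colour: "BH_aut f g \<Longrightarrow> BH_colour (f p) = BH_colour p"
  by (simp add: BH_colour_def hex_vert_def BH_aut_face_ctr_iff BH_aut_latt_iff)

lemma hex_vert_if_nbr_face_ctr:
  assumes "face_ctr c" "nbr c u" shows "hex_vert u"
proof -
  obtain i j i' j' where c: "c = (of_int i, of_int j)" and u: "u = (of_int i', of_int j')"
    and dir: "(i' - i, j' - j) \<in> {(1,0), (0,1), (-1,1), (-1,0), (0,-1), (1,-1)}"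
    using assms(2) by (rule nbr_of_intE)
  have "3 dvd (i - j)"
    using assms(1) unfolding c face_ctr_of_int_iff .
  then have "\<not> face_ctr u"
    using dir unfolding u face_ctr_of_int_iff by auto presburger+
  then show ?thesis
    using assms(2) unfolding hex_vert_def nbr_def by blast
qed

lemma BH_hom_chamber:
  assumes "BH_hom f" "D \<in> BH_chambers" shows "f ` D \<in> BH_chambers"
proof -
  obtain c u w where D: "D = {c, u, midpt u w}" and h: "face_ctr c"
    "nbr c u" "nbr c w" "nbr u w" using assms(2) unfolding BH_chambers_def by blast
  have "f ` D = {f c, f u, midpt (f u) (f w)}"
    using assms(1) unfolding D BH_hom_def by (simp del: split_paired_All)
  moreover have "face_ctr (f c)" "nbr (f c) (f u)" "nbr (f c) (f w)" "nbr (f u) (f w)"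
    using h assms(1) unfolding BH_hom_def by blast+
  ultimately show ?thesis
    unfolding BH_chambers_def using hex_vert_if_nbr_face_ctr by blast
qed

definition int_affine :: "int \<Rightarrow> int \<Rightarrow> int \<Rightarrow> int \<Rightarrow> int \<Rightarrow> int \<Rightarrow> real \<times> real \<Rightarrow> real \<times> real" where
  "int_affine a b c d s t p = (a * fst p + b * snd p + s, c * fst p + d * snd p + t)"

(* On a face centre x = y (mod 3), so the image has x' - y' = (a + b - c - d) x + (s - t) (mod 3). *)
lemma BH_hom_int_affine:
  assumes dirs: "(of_int a, of_int c) \<in> hex_dirs" "(of_int b, of_int d) \<in> hex_dirs"
      "(of_int (b - a), of_int (d - c)) \<in> hex_dirs"
    and faces: "3 dvd (a + b - c - d)" "3 dvd (s - t)"
  shows "BH_hom (int_affine a b c d s t)"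
  unfolding BH_hom_def
proof (intro conjI allI impI)
  fix p assume "latt p" then show "latt (int_affine a b c d s t p)"
    by (auto simp: latt_def int_affine_def)
next
  fix p assume "face_ctr p"
  then obtain i j where p: "p = (of_int i, of_int j)" and ij: "3 dvd (i - j)"
    unfolding face_ctr_iff by blast
  have "3 dvd (a + b - c - d) * i - (b - d) * (i - j) + (s - t)"
    by (rule dvd_add[OF dvd_diff[OF dvd_mult2[OF faces(1)] dvd_mult[OF ij]] faces(2)])
  also have "(a + b - c - d) * i - (b - d) * (i - j) + (s - t) = a * i + b * j + s - (c * i + d * j + t)"
    by algebra
  finally have "face_ctr (of_int (a * i + b * j + s), of_int (c * i + d * j + t))"
    unfolding face_ctr_of_int_iff .
  then show "face_ctr (int_affine a b c d s t p)"
    by (simp add: p int_affine_def)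
next
  have lin: "(a * x + b * y, c * x + d * y) \<in> hex_dirs" if "(x, y) \<in> hex_dirs" for x y :: real
  proof -
    have "(x, y) \<in> {(1,0), (0,1), (-1,1), (-1,0), (0,-1), (1,-1)}"
      using that unfolding hex_dirs_def .
    then show ?thesis
      using dirs hex_dirs_uminus[OF dirs(1)] hex_dirs_uminus[OF dirs(2)] hex_dirs_uminus[OF dirs(3)]
      by (auto simp: algebra_simps)
  qed
  fix p q assume "nbr p q"
  then show "nbr (int_affine a b c d s t p) (int_affine a b c d s t q)"
    using lin[of "fst q - fst p" "snd q - snd p"]
    unfolding nbr_iff_hex_dirs by (simp add: latt_def int_affine_def algebra_simps)
next
  fix u w show "int_affine a b c d s t (midpt u w) = midpt (int_affine a b c d s t u) (int_affine a b c d s t w)"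
    by (simp add: int_affine_def midpt_def field_simps)
qed

lemma bary_origin_iff:
  fixes a b p :: "real \<times> real"
  assumes d: "fst a * snd b - snd a * fst b \<noteq> 0"
    and \<alpha>: "\<alpha> * (fst a * snd b - snd a * fst b) = fst p * snd b - snd p * fst b"
    and \<beta>: "\<beta> * (fst a * snd b - snd a * fst b) = fst a * snd p - snd a * fst p"
    and \<gamma>: "\<alpha> + \<beta> + \<gamma> = 1"
  shows "bary a b (0, 0) p cs \<longleftrightarrow> cs = [\<alpha>, \<beta>, \<gamma>] \<and> 0 \<le> \<alpha> \<and> 0 \<le> \<beta> \<and> 0 \<le> \<gamma>"
proof -
  have "p = comb x y z a b (0, 0) \<longleftrightarrow> x = \<alpha> \<and> y = \<beta>" for x y z
  proof
    assume "p = comb x y z a b (0, 0)"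
    then have "fst p = x * fst a + y * fst b" "snd p = x * snd a + y * snd b"
      by (simp_all add: comb_def)
    then have "x * (fst a * snd b - snd a * fst b) = \<alpha> * (fst a * snd b - snd a * fst b)"
      "y * (fst a * snd b - snd a * fst b) = \<beta> * (fst a * snd b - snd a * fst b)"
      unfolding \<alpha> \<beta> by algebra+
    then show "x = \<alpha> \<and> y = \<beta>"
      using d by simp
  next
    assume "x = \<alpha> \<and> y = \<beta>"
    have "(fst p - (\<alpha> * fst a + \<beta> * fst b)) * (fst a * snd b - snd a * fst b) = 0"
      "(snd p - (\<alpha> * snd a + \<beta> * snd b)) * (fst a * snd b - snd a * fst b) = 0"
      using \<alpha> \<beta> by algebra+
    then show "p = comb x y z a b (0, 0)"
      using d \<open>x = \<alpha> \<and> y = \<beta>\<close> by (simp add: comb_def prod_eq_iff)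
  qed
  then show ?thesis
    unfolding bary_def using \<gamma> by force
qed

definition tri_l0 :: "real \<Rightarrow> real \<times> real \<Rightarrow> bool" where
  "tri_l0 L p \<longleftrightarrow> 0 \<le> snd p \<and> snd p \<le> fst p \<and> fst p + snd p \<le> L"

definition tri_ll :: "real \<Rightarrow> real \<times> real \<Rightarrow> bool" where
  "tri_ll L p \<longleftrightarrow> 0 \<le> fst p \<and> fst p \<le> snd p \<and> fst p + 2 * snd p \<le> 3 * L"

lemma bary_GC_l0:
  assumes "l \<ge> 1"
  shows "bary (real l, 0) (real l / 2, real l / 2) (0, 0) p cs \<longleftrightarrow>
    tri_l0 l p \<and> cs = [(fst p - snd p) / l, 2 * snd p / l, 1 - (fst p + snd p) / l]"
proof -
  have L: "real l > 0" using assms by simp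
  have "bary (real l, 0) (real l / 2, real l / 2) (0, 0) p cs \<longleftrightarrow>
      cs = [(fst p - snd p) / l, 2 * snd p / l, 1 - (fst p + snd p) / l] \<and>
      0 \<le> (fst p - snd p) / l \<and> 0 \<le> 2 * snd p / l \<and> 0 \<le> 1 - (fst p + snd p) / l"
    using L by (intro bary_origin_iff) (simp_all add: field_simps)
  then show ?thesis
    using L by (auto simp: tri_l0_def field_simps)
qed

lemma bary_GC_ll:
  assumes "k \<ge> 1"
  shows "bary (real k, real k) (0, 3 * real k / 2) (0, 0) p cs \<longleftrightarrow>
    tri_ll k p \<and> cs = [fst p / k, 2 * (snd p - fst p) / (3 * k), 1 - (fst p + 2 * snd p) / (3 * k)]"
proof -
  have K: "real k > 0" using assms by simp
  have "bary (real k, real k) (0, 3 * real k / 2) (0, 0) p cs \<longleftrightarrow>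
      cs = [fst p / k, 2 * (snd p - fst p) / (3 * k), 1 - (fst p + 2 * snd p) / (3 * k)] \<and>
      0 \<le> fst p / k \<and> 0 \<le> 2 * (snd p - fst p) / (3 * k) \<and> 0 \<le> 1 - (fst p + 2 * snd p) / (3 * k)"
    using K by (intro bary_origin_iff) (simp_all add: field_simps)
  then show ?thesis
    using K by (auto simp: tri_ll_def field_simps)
qed

lemma GC_simps:
  "chambers (GC l m) =
    {C \<in> BH_chambers. \<forall>p\<in>C. in_tri (GC_corner l m 0) (GC_corner l m 1) (GC_corner l m 2) p}"
  "colour (GC l m) = BH_colour"
  "corner (GC l m) = GC_corner l m"
  "carrier (GC l m) p =
    {k. k < 3 \<and> (\<exists>cs. bary (GC_corner l m 0) (GC_corner l m 1) (GC_corner l m 2) p cs \<and> cs ! k > 0)}"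
  by (simp_all add: GC_def Let_def)

lemma chambers_GC_l0: "l \<ge> 1 \<Longrightarrow> chambers (GC l 0) = {C \<in> BH_chambers. \<forall>p\<in>C. tri_l0 l p}"
  by (simp add: GC_simps GC_corner_def in_tri_def bary_GC_l0)

lemma chambers_GC_ll: "k \<ge> 1 \<Longrightarrow> chambers (GC k k) = {C \<in> BH_chambers. \<forall>p\<in>C. tri_ll k p}"
  by (simp add: GC_simps GC_corner_def in_tri_def bary_GC_ll)

lemma carrier_GC_subset: "carrier (GC l m) p \<subseteq> {..<3}"
  by (auto simp: GC_simps)

lemma carrier_GC_l0:
  assumes "l \<ge> 1" "tri_l0 l p"
  shows "carrier (GC l 0) p =
    {k. k = 0 \<and> snd p < fst p \<or> k = 1 \<and> 0 < snd p \<or> k = 2 \<and> fst p + snd p < l}"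
proof -
  have "carrier (GC l 0) p =
      {k. k < 3 \<and> [(fst p - snd p) / l, 2 * snd p / l, 1 - (fst p + snd p) / l] ! k > 0}"
    using assms by (simp add: GC_simps GC_corner_def bary_GC_l0)
  also have "\<dots> = {k. k = 0 \<and> snd p < fst p \<or> k = 1 \<and> 0 < snd p \<or> k = 2 \<and> fst p + snd p < l}"
    using assms(1) by (auto simp: less_Suc_eq numeral_3_eq_3 field_simps)
  finally show ?thesis .
qed

lemma carrier_GC_ll:
  assumes "k \<ge> 1" "tri_ll k p"
  shows "carrier (GC k k) p =
    {j. j = 0 \<and> 0 < fst p \<or> j = 1 \<and> fst p < snd p \<or> j = 2 \<and> fst p + 2 * snd p < 3 * k}"
proof -
  have "carrier (GC k k) p =
      {j. j < 3 \<and> [fst p / k, 2 * (snd p - fst p) / (3 * k), 1 - (fst p + 2 * snd p) / (3 * k)] ! j > 0}"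
    using assms by (simp add: GC_simps GC_corner_def bary_GC_ll)
  also have "\<dots> = {j. j = 0 \<and> 0 < fst p \<or> j = 1 \<and> fst p < snd p \<or> j = 2 \<and> fst p + 2 * snd p < 3 * k}"
    using assms(1) by (auto simp: less_Suc_eq numeral_3_eq_3 field_simps)
  finally show ?thesis .
qed

lemma BH_colour_chamber_bij:
  assumes "D \<in> BH_chambers" shows "bij_betw BH_colour D {..<3}"
proof -
  obtain c u w where D: "D = {c, u, midpt u w}" and h: "face_ctr c" "nbr c u" "nbr u w"
    using assms unfolding BH_chambers_def by blast
  have u: "hex_vert u" using hex_vert_if_nbr_face_ctr h by blast
  have m: "\<not> latt (midpt u w)" using not_latt_midpt h by blast
  have "BH_colour c = 2" "BH_colour u = 0" "BH_colour (midpt u w) = 1"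
    using h(1) u m unfolding BH_colour_def hex_vert_def face_ctr_def by auto
  moreover have "{..<3} = {2, 0, 1::nat}" by auto
  ultimately show ?thesis
    unfolding D bij_betw_def inj_on_def by auto
qed

lemma BH_colour_the_inv_into:
  assumes "D \<in> BH_chambers" "k < 3"
  shows "the_inv_into D BH_colour k \<in> D" "BH_colour (the_inv_into D BH_colour k) = k"
  using bij_betw_the_inv_into[OF BH_colour_chamber_bij[OF assms(1)]] assms(2)
    f_the_inv_into_f_bij_betw[OF BH_colour_chamber_bij[OF assms(1)]]
  by (auto dest: bij_betwE)

lemma BH_chamber_vertex_eqI:
  assumes "D \<in> BH_chambers" "x \<in> D" "BH_colour x = k"
  shows "the_inv_into D BH_colour k = x"
  using BH_colour_chamber_bij[OF assms(1)] assms(2,3)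
  by (auto intro: the_inv_into_f_eq simp: bij_betw_def)

lemma BH_chamber_colour_filter:
  assumes "D \<in> BH_chambers" "S \<subseteq> {..<3}"
  shows "{x \<in> D. BH_colour x \<in> S} = the_inv_into D BH_colour ` S"
proof -
  have inj: "inj_on BH_colour D"
    using BH_colour_chamber_bij[OF assms(1)] unfolding bij_betw_def by blast
  show ?thesis
  proof (intro equalityI subsetI)
    fix x assume x: "x \<in> {x \<in> D. BH_colour x \<in> S}"
    then have "x = the_inv_into D BH_colour (BH_colour x)"
      using the_inv_into_f_f[OF inj] by simp
    then show "x \<in> the_inv_into D BH_colour ` S"
      using x by blast
  next
    fix x assume "x \<in> the_inv_into D BH_colour ` S"
    then obtain k where k: "k \<in> S" "x = the_inv_into D BH_colour k" by blast
    then have "k < 3" using assms(2) by blast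
    then show "x \<in> {x \<in> D. BH_colour x \<in> S}"
      using k BH_colour_the_inv_into[OF assms(1)] by simp
  qed
qed

lemma glue_rel_BH_iff:
  assumes C: "C \<in> BH_chambers" and C': "C' \<in> BH_chambers"
    and "colour Q = BH_colour" and S: "carrier Op p \<subseteq> {..<3}"
  shows "glue_rel Op Q (C, p) (C', q) \<longleftrightarrow>
    p = q \<and> (\<forall>k\<in>carrier Op p. the_inv_into C BH_colour k = the_inv_into C' BH_colour k)"
proof -
  let ?S = "carrier Op p" and ?v = "the_inv_into C BH_colour" and ?v' = "the_inv_into C' BH_colour"
  have "?v ` ?S = ?v' ` ?S \<longleftrightarrow> (\<forall>k\<in>?S. ?v k = ?v' k)"
  proof
    assume eq: "?v ` ?S = ?v' ` ?S"
    show "\<forall>k\<in>?S. ?v k = ?v' k"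
    proof
      fix k assume k: "k \<in> ?S"
      then obtain j where j: "j \<in> ?S" "?v k = ?v' j"
        using eq by (metis imageE image_eqI)
      have "k < 3" "j < 3" using k j(1) S by auto
      then have "BH_colour (?v k) = k" "BH_colour (?v' j) = j"
        using BH_colour_the_inv_into(2)[OF C] BH_colour_the_inv_into(2)[OF C'] by blast+
      then show "?v k = ?v' k" using j(2) by simp
    qed
  next
    assume "\<forall>k\<in>?S. ?v k = ?v' k"
    then show "?v ` ?S = ?v' ` ?S" by (intro image_cong) simp_all
  qed
  moreover have "{x \<in> C. BH_colour x \<in> ?S} = ?v ` ?S" "{x \<in> C'. BH_colour x \<in> ?S} = ?v' ` ?S"
    using BH_chamber_colour_filter C C' S by blast+
  ultimately show ?thesis
    unfolding glue_rel_def using assms(3) by auto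
qed

definition adjacent_hex_dirs :: "((real \<times> real) \<times> (real \<times> real)) set" where
  "adjacent_hex_dirs = {((1,0),(0,1)), ((0,1),(1,0)), ((0,1),(-1,1)), ((-1,1),(0,1)),
    ((-1,1),(-1,0)), ((-1,0),(-1,1)), ((-1,0),(0,-1)), ((0,-1),(-1,0)),
    ((0,-1),(1,-1)), ((1,-1),(0,-1)), ((1,-1),(1,0)), ((1,0),(1,-1))}"

lemma adjacent_hex_dirsI:
  assumes "v \<in> hex_dirs" "w \<in> hex_dirs" "(fst w - fst v, snd w - snd v) \<in> hex_dirs"
  shows "(v, w) \<in> adjacent_hex_dirs"
  using assms(1,2) unfolding hex_dirs_def adjacent_hex_dirs_def
  apply (simp only: insert_iff empty_iff)
  apply (elim disjE; simp)
  using assms(3) by (simp_all add: hex_dirs_def)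

lemma BH_chamber_param:
  assumes "D \<in> BH_chambers"
  obtains i j :: int and v w :: "real \<times> real" where "3 dvd (i - j)"
    and "(v, w) \<in> adjacent_hex_dirs"
    and "D = {(of_int i, of_int j), (i + fst v, j + snd v), (i + (fst v + fst w) / 2, j + (snd v + snd w) / 2)}"
proof -
  obtain c u w where D: "D = {c, u, midpt u w}" and h: "face_ctr c" "nbr c u" "nbr c w" "nbr u w"
    using assms unfolding BH_chambers_def by blast
  obtain i j where c: "c = (of_int i, of_int j)" "3 dvd (i - j)"
    using h(1) unfolding face_ctr_iff by blast
  define v where "v = (fst u - fst c, snd u - snd c)"
  define v' where "v' = (fst w - fst c, snd w - snd c)"
  have "v \<in> hex_dirs" "v' \<in> hex_dirs" "(fst v' - fst v, snd v' - snd v) \<in> hex_dirs"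
    using h(2-4) unfolding nbr_iff_hex_dirs v_def v'_def by simp_all
  then have "(v, v') \<in> adjacent_hex_dirs"
    by (rule adjacent_hex_dirsI)
  moreover have "D = {(of_int i, of_int j), (i + fst v, j + snd v), (i + (fst v + fst v') / 2, j + (snd v + snd v') / 2)}"
    unfolding D v_def v'_def c midpt_def by (simp add: field_simps)
  ultimately show thesis
    by (rule that[OF c(2)])
qed

lemma values_one_side:
  fixes n N d s t :: real
  assumes "n = N \<or> N + d \<le> n \<or> n \<le> N - d" "- d \<le> s" "s \<le> d" "- 2 * d \<le> s + t" "s + t \<le> 2 * d"
    and "0 \<le> s \<and> 0 \<le> s + t \<or> s \<le> 0 \<and> s + t \<le> 0"
  shows "(\<forall>x\<in>{n, n + s, n + (s + t) / 2}. x \<le> N) \<or> (\<forall>x\<in>{n, n + s, n + (s + t) / 2}. N \<le> x)"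
  using assms by simp argo

lemma BH_chamber_not_crossing:
  fixes a b N :: int
  assumes "D \<in> BH_chambers"
    and ab: "(a, b) \<in> {(1,0), (0,1), (1,1)} \<or> (a, b) \<in> {(2,1), (1,2), (1,-1)} \<and> 3 dvd N"
  shows "(\<forall>p\<in>D. a * fst p + b * snd p \<le> N) \<or> (\<forall>p\<in>D. N \<le> a * fst p + b * snd p)"
proof -
  obtain i j v w where ij: "3 dvd (i - j)"
    and vw: "(v, w) \<in> adjacent_hex_dirs"
    and D: "D = {(of_int i, of_int j), (i + fst v, j + snd v), (i + (fst v + fst w) / 2, j + (snd v + snd w) / 2)}"
    using BH_chamber_param[OF assms(1)] by blast
  define n where "n = a * i + b * j"
  define s where "s = a * fst v + b * snd v"
  define t where "t = a * fst w + b * snd w"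
  define d :: int where "d = (if (a, b) \<in> {(1,0), (0,1), (1,1)} then 1 else 2)"
  (* The form takes the values n, n + s, n + (s + t)/2 on D; the increments s, t along adjacent
     neighbour directions have equal signs and size at most d, while n is N or at least d away. *)
  have st: "- d \<le> s \<and> s \<le> d \<and> - 2 * d \<le> s + t \<and> s + t \<le> 2 * d \<and> (0 \<le> s \<and> 0 \<le> s + t \<or> s \<le> 0 \<and> s + t \<le> 0)"
    using ab vw unfolding s_def t_def d_def adjacent_hex_dirs_def
    by (simp only: insert_iff empty_iff prod.inject) (elim disjE conjE; simp)
  have "n = N \<or> N + d \<le> n \<or> n \<le> N - d"
  proof (cases "(a, b) \<in> {(1,0), (0,1), (1,1)}")
    case True
    then show ?thesis unfolding d_def by auto
  next
    case False
    then have "(a, b) \<in> {(2,1), (1,2), (1,-1)}" "3 dvd N" using ab by blast+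
    moreover from this(1) have "3 dvd n"
      unfolding n_def using ij by (auto, presburger+)
    ultimately show ?thesis
      using False unfolding d_def by presburger
  qed
  then have n: "real_of_int n = N \<or> real_of_int N + d \<le> n \<or> real_of_int n \<le> real_of_int N - d"
    by (metis of_int_add of_int_diff of_int_eq_iff of_int_le_iff)
  have "(\<forall>x\<in>{real_of_int n, n + s, n + (s + t) / 2}. x \<le> N) \<or>
      (\<forall>x\<in>{real_of_int n, n + s, n + (s + t) / 2}. N \<le> x)"
    using values_one_side[OF n] st by simp
  moreover have "a * fst p + b * snd p \<in> {real_of_int n, n + s, n + (s + t) / 2}" if "p \<in> D" for p :: "real \<times> real"
    using that unfolding D n_def s_def t_def by (auto simp: field_simps)
  ultimately show ?thesis
    by blast
qed

definition GC11_ch0 :: "(real \<times> real) set" where "GC11_ch0 = {(0,0), (0,1), (1/2,1/2)}"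
definition GC11_ch1 :: "(real \<times> real) set" where "GC11_ch1 = {(1,1), (0,1), (1/2,1/2)}"
definition GC11_ch2 :: "(real \<times> real) set" where "GC11_ch2 = {(1,1), (0,1), (0,3/2)}"

lemma GC11_points:
  "face_ctr (0,0)" "face_ctr (1,1)" "nbr (0,0) (0,1)" "nbr (0,0) (1,0)" "nbr (0,1) (1,0)"
  "nbr (1,1) (0,1)" "nbr (1,1) (1,0)" "nbr (1,1) (0,2)" "nbr (0,1) (0,2)"
  "midpt (0,1) (1,0) = (1/2,1/2)" "midpt (0,1) (0,2) = (0,3/2)"
  using face_ctr_of_int_iff[of 0 0] face_ctr_of_int_iff[of 1 1]
  by (simp_all add: nbr_def latt_def midpt_def)

lemma BH_colour_GC11_points:
  "BH_colour (0,0) = 2" "BH_colour (1,1) = 2" "BH_colour (0,1) = 0"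
  "BH_colour (1/2,1/2) = 1" "BH_colour (0,3/2) = 1"
proof -
  have "hex_vert (0,1)"
    using hex_vert_if_nbr_face_ctr[OF GC11_points(1,3)] .
  moreover have "\<not> latt (1/2,1/2)" "\<not> latt (0,3/2)"
    using not_latt_midpt[OF GC11_points(5)] not_latt_midpt[OF GC11_points(9)]
    unfolding GC11_points(10,11) .
  ultimately show "BH_colour (0,0) = 2" "BH_colour (1,1) = 2" "BH_colour (0,1) = 0"
    "BH_colour (1/2,1/2) = 1" "BH_colour (0,3/2) = 1"
    using GC11_points(1,2) by (simp_all add: BH_colour_def hex_vert_def face_ctr_def[of "(1/2,1/2)"]
        face_ctr_def[of "(0,3/2)"])
qed

lemma BH_chambersI:
  "face_ctr c \<Longrightarrow> nbr c u \<Longrightarrow> nbr c w \<Longrightarrow> nbr u w \<Longrightarrow> {c, u, midpt u w} \<in> BH_chambers"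
  unfolding BH_chambers_def using hex_vert_if_nbr_face_ctr by blast

lemma GC11_chs_BH: "GC11_ch0 \<in> BH_chambers" "GC11_ch1 \<in> BH_chambers" "GC11_ch2 \<in> BH_chambers"
  using BH_chambersI[OF GC11_points(1,3,4,5)] BH_chambersI[OF GC11_points(2,6,7,5)]
    BH_chambersI[OF GC11_points(2,6,8,9)]
  by (simp_all add: GC11_points GC11_ch0_def GC11_ch1_def GC11_ch2_def)

lemma chambers_GC11: "chambers (GC 1 1) = {GC11_ch0, GC11_ch1, GC11_ch2}"
proof -
  have "D \<in> {GC11_ch0, GC11_ch1, GC11_ch2}" if D: "D \<in> BH_chambers" "\<forall>p\<in>D. tri_ll 1 p" for D
  proof -
    obtain i j v w where ij: "3 dvd (i - j)"
      and vw: "(v, w) \<in> adjacent_hex_dirs"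
      and D_eq: "D = {(of_int i, of_int j), (i + fst v, j + snd v), (i + (fst v + fst w) / 2, j + (snd v + snd w) / 2)}"
      using BH_chamber_param[OF D(1)] by blast
    have "tri_ll 1 (of_int i, of_int j)" using D(2) D_eq by blast
    then have "0 \<le> i" "i \<le> j" "i + 2 * j \<le> 3"
      unfolding tri_ll_def by (simp_all flip: of_int_le_iff)
    then have "i = 0 \<and> j = 0 \<or> i = 1 \<and> j = 1" using ij by presburger
    then show ?thesis
      using vw D(2) unfolding D_eq adjacent_hex_dirs_def
      apply (simp only: insert_iff empty_iff prod.inject)
      apply (elim disjE conjE)
      apply (simp_all add: tri_ll_def GC11_ch0_def GC11_ch1_def GC11_ch2_def)
      done
  qed
  moreover have "\<forall>p\<in>C. tri_ll 1 p" if "C \<in> {GC11_ch0, GC11_ch1, GC11_ch2}" for C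
    using that by (auto simp: tri_ll_def GC11_ch0_def GC11_ch1_def GC11_ch2_def)
  ultimately have "{D \<in> BH_chambers. \<forall>p\<in>D. tri_ll 1 p} = {GC11_ch0, GC11_ch1, GC11_ch2}"
    using GC11_chs_BH by blast
  then show ?thesis
    using chambers_GC_ll[of 1] by simp
qed

lemma GC11_chs_distinct: "GC11_ch0 \<noteq> GC11_ch1" "GC11_ch0 \<noteq> GC11_ch2" "GC11_ch1 \<noteq> GC11_ch2"
proof -
  have "(0,0) \<in> GC11_ch0" "(0,0) \<notin> GC11_ch1" "(0,0) \<notin> GC11_ch2"
    "(1/2,1/2) \<in> GC11_ch1" "(1/2,1/2) \<notin> GC11_ch2"
    by (simp_all add: GC11_ch0_def GC11_ch1_def GC11_ch2_def)
  then show "GC11_ch0 \<noteq> GC11_ch1" "GC11_ch0 \<noteq> GC11_ch2" "GC11_ch1 \<noteq> GC11_ch2"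
    by metis+
qed

lemma GC11_vertices:
  "the_inv_into GC11_ch0 BH_colour 0 = (0,1)" "the_inv_into GC11_ch0 BH_colour 1 = (1/2,1/2)"
  "the_inv_into GC11_ch0 BH_colour 2 = (0,0)"
  "the_inv_into GC11_ch1 BH_colour 0 = (0,1)" "the_inv_into GC11_ch1 BH_colour 1 = (1/2,1/2)"
  "the_inv_into GC11_ch1 BH_colour 2 = (1,1)"
  "the_inv_into GC11_ch2 BH_colour 0 = (0,1)" "the_inv_into GC11_ch2 BH_colour 1 = (0,3/2)"
  "the_inv_into GC11_ch2 BH_colour 2 = (1,1)"
  by (intro BH_chamber_vertex_eqI GC11_chs_BH;
      simp add: BH_colour_GC11_points GC11_ch0_def GC11_ch1_def GC11_ch2_def)+

lemma glue_rel_GC11_iff: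
  assumes C: "C \<in> chambers (GC 1 1)" and C': "C' \<in> chambers (GC 1 1)" and S: "carrier Op p \<subseteq> {..<3}"
  shows "glue_rel Op (GC 1 1) (C, p) (C', q) \<longleftrightarrow> p = q
    \<and> (1 \<in> carrier Op p \<longrightarrow> (C = GC11_ch2 \<longleftrightarrow> C' = GC11_ch2))
    \<and> (2 \<in> carrier Op p \<longrightarrow> (C = GC11_ch0 \<longleftrightarrow> C' = GC11_ch0))"
proof -
  let ?v = "\<lambda>C. the_inv_into C BH_colour"
  have "C \<in> BH_chambers" "C' \<in> BH_chambers"
    using C C' GC11_chs_BH unfolding chambers_GC11 by blast+
  then have "glue_rel Op (GC 1 1) (C, p) (C', q) \<longleftrightarrow> p = q \<and> (\<forall>k\<in>carrier Op p. ?v C k = ?v C' k)"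
    using S by (simp add: glue_rel_BH_iff GC_simps)
  also have "(\<forall>k\<in>carrier Op p. ?v C k = ?v C' k) \<longleftrightarrow> (0 \<in> carrier Op p \<longrightarrow> ?v C 0 = ?v C' 0)
      \<and> (1 \<in> carrier Op p \<longrightarrow> ?v C 1 = ?v C' 1) \<and> (2 \<in> carrier Op p \<longrightarrow> ?v C 2 = ?v C' 2)"
  proof -
    have "k = 0 \<or> k = 1 \<or> k = 2" if "k \<in> carrier Op p" for k
      using S that by auto
    then show ?thesis by blast
  qed
  also have "\<dots> \<longleftrightarrow> (1 \<in> carrier Op p \<longrightarrow> (C = GC11_ch2 \<longleftrightarrow> C' = GC11_ch2))
      \<and> (2 \<in> carrier Op p \<longrightarrow> (C = GC11_ch0 \<longleftrightarrow> C' = GC11_ch0))"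
    using C C' unfolding chambers_GC11
    by (elim insertE emptyE; hypsubst; simp only: GC11_vertices;
        simp add: GC11_chs_distinct GC11_chs_distinct[THEN not_sym])
  finally show ?thesis .
qed

section \<open>Composition of operations\<close>

lemma glue_rel_sym: "glue_rel Op Q a b \<Longrightarrow> glue_rel Op Q b a"
  unfolding glue_rel_def by metis

lemma glue_rel_trans: "glue_rel Op Q a b \<Longrightarrow> glue_rel Op Q b c \<Longrightarrow> glue_rel Op Q a c"
  unfolding glue_rel_def by metis

lemma glue_cls_eq: "glue_rel Op Q (C, p) (C', q) \<Longrightarrow> glue_cls Op Q C p = glue_cls Op Q C' q"
  unfolding glue_cls_def by (blast intro: glue_rel_trans glue_rel_sym)

lemma self_in_glue_cls: "C \<in> chambers Q \<Longrightarrow> p \<in> verts Op \<Longrightarrow> (C, p) \<in> glue_cls Op Q C p"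
  unfolding glue_cls_def glue_rel_def by simp

lemma glue_cls_eq_iff:
  assumes "C \<in> chambers Q" "p \<in> verts Op"
  shows "glue_cls Op Q C p = glue_cls Op Q C' q \<longleftrightarrow> glue_rel Op Q (C, p) (C', q)"
proof
  assume "glue_cls Op Q C p = glue_cls Op Q C' q"
  then have "(C, p) \<in> glue_cls Op Q C' q"
    using self_in_glue_cls[OF assms] by simp
  then show "glue_rel Op Q (C, p) (C', q)"
    unfolding glue_cls_def by (blast intro: glue_rel_sym)
qed (rule glue_cls_eq)

lemma colour_gc_comp:
  assumes "C \<in> chambers Q" "p \<in> verts Op"
  shows "colour (gc_comp Op Q) (glue_cls Op Q C p) = colour Op p"
proof -
  have "(SOME z. z \<in> glue_cls Op Q C p) \<in> glue_cls Op Q C p"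
    using self_in_glue_cls[OF assms] by (rule someI)
  then have "snd (SOME z. z \<in> glue_cls Op Q C p) = p"
    unfolding glue_cls_def glue_rel_def by auto
  then show ?thesis
    by (simp add: gc_comp_def)
qed

lemma verts_gc_comp:
  "verts (gc_comp Op Q) = {glue_cls Op Q C p | C p. C \<in> chambers Q \<and> p \<in> verts Op}"
  unfolding verts_def gc_comp_def by auto

definition glue_map :: "('p, 'z) oper_scheme \<Rightarrow> ('q, 'y) ctri_scheme \<Rightarrow> ('q set \<Rightarrow> 'p \<Rightarrow> 'a) \<Rightarrow> ('p \<Rightarrow> bool)
    \<Rightarrow> 'a \<Rightarrow> ('q set \<times> 'p) set" where
  "glue_map Op Q \<psi> R x =
    (let z = SOME z. fst z \<in> chambers Q \<and> R (snd z) \<and> \<psi> (fst z) (snd z) = x in glue_cls Op Q (fst z) (snd z))"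

lemma glue_map_eq:
  assumes rel: "\<And>C C' p q. C \<in> chambers Q \<Longrightarrow> C' \<in> chambers Q \<Longrightarrow> R p \<Longrightarrow> R q \<Longrightarrow>
      \<psi> C p = \<psi> C' q \<Longrightarrow> glue_rel Op Q (C, p) (C', q)"
    and "C \<in> chambers Q" "R p"
  shows "glue_map Op Q \<psi> R (\<psi> C p) = glue_cls Op Q C p"
proof -
  define z where "z = (SOME z. fst z \<in> chambers Q \<and> R (snd z) \<and> \<psi> (fst z) (snd z) = \<psi> C p)"
  have "fst z \<in> chambers Q \<and> R (snd z) \<and> \<psi> (fst z) (snd z) = \<psi> C p"
    unfolding z_def by (rule someI[of _ "(C, p)"]) (simp add: assms(2,3))
  then have "glue_rel Op Q (fst z, snd z) (C, p)"
    using assms(2,3) by (intro rel) auto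
  then have "glue_cls Op Q (fst z) (snd z) = glue_cls Op Q C p"
    by (rule glue_cls_eq)
  then show ?thesis
    unfolding glue_map_def z_def[symmetric] Let_def .
qed

lemma verts_eq_images:
  assumes "chambers A = {\<psi> C ` T | C T. C \<in> I \<and> T \<in> chambers Op}"
  shows "verts A = {\<psi> C p | C p. C \<in> I \<and> p \<in> verts Op}"
  unfolding verts_def assms by blast

lemma bij_betw_glue_map:
  assumes region: "\<And>T p. T \<in> chambers Op \<Longrightarrow> p \<in> T \<Longrightarrow> R p"
    and inj: "\<And>C C' p q. C \<in> chambers Q \<Longrightarrow> C' \<in> chambers Q \<Longrightarrow> R p \<Longrightarrow> R q \<Longrightarrow>
      \<psi> C p = \<psi> C' q \<longleftrightarrow> glue_rel Op Q (C, p) (C', q)"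
    and chambers: "chambers A = {\<psi> C ` T | C T. C \<in> chambers Q \<and> T \<in> chambers Op}"
  shows "bij_betw (glue_map Op Q \<psi> R) (verts A) (verts (gc_comp Op Q))"
proof -
  let ?f = "glue_map Op Q \<psi> R"
  have f: "?f (\<psi> C p) = glue_cls Op Q C p" if "C \<in> chambers Q" "p \<in> verts Op" for C p
    using that region unfolding verts_def by (intro glue_map_eq) (auto simp: inj)
  have Rv: "R p" if "p \<in> verts Op" for p
    using that region unfolding verts_def by blast
  note VA = verts_eq_images[OF chambers]
  have "inj_on ?f (verts A)"
  proof (rule inj_onI)
    fix x y assume "x \<in> verts A" "y \<in> verts A" and eq: "?f x = ?f y"
    then obtain C p C' q where x: "x = \<psi> C p" "C \<in> chambers Q" "p \<in> verts Op"
      and y: "y = \<psi> C' q" "C' \<in> chambers Q" "q \<in> verts Op"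
      unfolding VA by blast
    have "glue_cls Op Q C p = glue_cls Op Q C' q"
      using eq f x y by metis
    then show "x = y"
      unfolding x y using inj x y Rv glue_cls_eq_iff by metis
  qed
  moreover have "?f ` verts A = verts (gc_comp Op Q)"
  proof (intro equalityI subsetI)
    fix y assume "y \<in> ?f ` verts A"
    then obtain C p where "y = ?f (\<psi> C p)" "C \<in> chambers Q" "p \<in> verts Op"
      unfolding VA by blast
    then show "y \<in> verts (gc_comp Op Q)"
      unfolding verts_gc_comp using f by blast
  next
    fix y assume "y \<in> verts (gc_comp Op Q)"
    then obtain C p where "y = glue_cls Op Q C p" "C \<in> chambers Q" "p \<in> verts Op"
      unfolding verts_gc_comp by blast
    then show "y \<in> ?f ` verts A"
      unfolding VA using f by (intro image_eqI[of _ _ "\<psi> C p"]) auto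
  qed
  ultimately show ?thesis
    unfolding bij_betw_def ..
qed

lemma glue_map_chambers:
  assumes region: "\<And>T p. T \<in> chambers Op \<Longrightarrow> p \<in> T \<Longrightarrow> R p"
    and rel: "\<And>C C' p q. C \<in> chambers Q \<Longrightarrow> C' \<in> chambers Q \<Longrightarrow> R p \<Longrightarrow> R q \<Longrightarrow>
      \<psi> C p = \<psi> C' q \<Longrightarrow> glue_rel Op Q (C, p) (C', q)"
    and chambers: "chambers A = {\<psi> C ` T | C T. C \<in> chambers Q \<and> T \<in> chambers Op}"
  shows "(\<lambda>X. glue_map Op Q \<psi> R ` X) ` chambers A = chambers (gc_comp Op Q)"
proof -
  let ?f = "glue_map Op Q \<psi> R"
  have im: "?f ` \<psi> C ` T = glue_cls Op Q C ` T" if "C \<in> chambers Q" "T \<in> chambers Op" for C T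
    unfolding image_image using that region by (intro image_cong glue_map_eq rel) auto
  show ?thesis
  proof (intro equalityI subsetI)
    fix Y assume "Y \<in> (\<lambda>X. ?f ` X) ` chambers A"
    then obtain C T where "Y = ?f ` \<psi> C ` T" "C \<in> chambers Q" "T \<in> chambers Op"
      unfolding chambers by blast
    then show "Y \<in> chambers (gc_comp Op Q)"
      using im by (auto simp: gc_comp_def)
  next
    fix Y assume "Y \<in> chambers (gc_comp Op Q)"
    then obtain C T where "Y = glue_cls Op Q C ` T" "C \<in> chambers Q" "T \<in> chambers Op"
      by (auto simp: gc_comp_def)
    then show "Y \<in> (\<lambda>X. ?f ` X) ` chambers A"
      unfolding chambers using im by (intro image_eqI[of _ _ "\<psi> C ` T"]) auto
  qed
qed

lemma ctri_iso_gc_compI: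
  fixes A :: "('a, 'x) ctri_scheme" and Op :: "('p, 'z) oper_scheme" and Q :: "('q, 'y) ctri_scheme"
  assumes region: "\<And>T p. T \<in> chambers Op \<Longrightarrow> p \<in> T \<Longrightarrow> R p"
    and inj: "\<And>C C' p q. C \<in> chambers Q \<Longrightarrow> C' \<in> chambers Q \<Longrightarrow> R p \<Longrightarrow> R q \<Longrightarrow>
      \<psi> C p = \<psi> C' q \<longleftrightarrow> glue_rel Op Q (C, p) (C', q)"
    and chambers: "chambers A = {\<psi> C ` T | C T. C \<in> chambers Q \<and> T \<in> chambers Op}"
    and colour: "\<And>C p. C \<in> chambers Q \<Longrightarrow> p \<in> verts Op \<Longrightarrow> colour A (\<psi> C p) = colour Op p"
    and corner_in: "\<And>k. k < 3 \<Longrightarrow> \<exists>C\<in>chambers Q. corner Q k \<in> C"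
    and corner: "\<And>k C. k < 3 \<Longrightarrow> C \<in> chambers Q \<Longrightarrow> corner Q k \<in> C \<Longrightarrow>
      \<psi> C (corner Op (colour Q (corner Q k))) = corner A k \<and> R (corner Op (colour Q (corner Q k)))"
  shows "ctri_iso A (gc_comp Op Q)"
proof -
  let ?f = "glue_map Op Q \<psi> R"
  have f: "?f (\<psi> C p) = glue_cls Op Q C p" if "C \<in> chambers Q" "R p" for C p
    using that by (intro glue_map_eq) (simp_all add: inj)
  have "colour (gc_comp Op Q) (?f x) = colour A x" if xA: "x \<in> verts A" for x
  proof -
    obtain C p where x: "x = \<psi> C p" "C \<in> chambers Q" "p \<in> verts Op"
      using xA unfolding verts_eq_images[OF chambers] by blast
    moreover have "R p"
      using x(3) region unfolding verts_def by blast
    ultimately show ?thesis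
      using colour colour_gc_comp f by simp
  qed
  moreover have "?f (corner A k) = corner (gc_comp Op Q) k" if "k < 3" for k
  proof -
    define C where "C = (SOME C. C \<in> chambers Q \<and> corner Q k \<in> C)"
    have C: "C \<in> chambers Q \<and> corner Q k \<in> C"
      unfolding C_def using corner_in[OF that] by (metis (mono_tags, lifting) someI_ex)
    let ?c = "corner Op (colour Q (corner Q k))"
    have "\<psi> C ?c = corner A k" "R ?c"
      using corner[OF that] C by blast+
    then have "?f (corner A k) = glue_cls Op Q C ?c"
      using f C by metis
    then show ?thesis
      by (simp add: gc_comp_def C_def)
  qed
  moreover have "bij_betw ?f (verts A) (verts (gc_comp Op Q))"
    using region inj chambers by (rule bij_betw_glue_map)
  moreover have "(\<lambda>X. ?f ` X) ` chambers A = chambers (gc_comp Op Q)"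
    using region inj chambers by (intro glue_map_chambers) blast+
  ultimately show ?thesis
    unfolding ctri_iso_def by blast
qed

lemma corner_GC11: "corner (GC 1 1) 0 = (1,1)" "corner (GC 1 1) 1 = (0,3/2)" "corner (GC 1 1) 2 = (0,0)"
  by (simp_all add: GC_simps GC_corner_def)

lemma ctri_iso_gc_comp_GC11I:
  fixes A :: "('a, 'x) ctri_scheme" and Op :: "(real \<times> real, 'z) oper_scheme"
  assumes region: "\<And>T p. T \<in> chambers Op \<Longrightarrow> p \<in> T \<Longrightarrow> R p"
    and carrier: "\<And>p. carrier Op p \<subseteq> {..<3}"
    and inj: "\<And>C C' p q. C \<in> chambers (GC 1 1) \<Longrightarrow> C' \<in> chambers (GC 1 1) \<Longrightarrow> R p \<Longrightarrow> R q \<Longrightarrow>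
      \<psi> C p = \<psi> C' q \<longleftrightarrow> p = q
        \<and> (1 \<in> carrier Op p \<longrightarrow> (C = GC11_ch2 \<longleftrightarrow> C' = GC11_ch2))
        \<and> (2 \<in> carrier Op p \<longrightarrow> (C = GC11_ch0 \<longleftrightarrow> C' = GC11_ch0))"
    and chambers: "chambers A = {\<psi> C ` T | C T. C \<in> chambers (GC 1 1) \<and> T \<in> chambers Op}"
    and colour: "\<And>C p. C \<in> chambers (GC 1 1) \<Longrightarrow> p \<in> verts Op \<Longrightarrow> colour A (\<psi> C p) = colour Op p"
    and corners: "\<psi> GC11_ch1 (corner Op 2) = corner A 0" "\<psi> GC11_ch2 (corner Op 2) = corner A 0"
      "\<psi> GC11_ch2 (corner Op 1) = corner A 1" "\<psi> GC11_ch0 (corner Op 2) = corner A 2"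
      "R (corner Op 1)" "R (corner Op 2)"
  shows "ctri_iso A (gc_comp Op (GC 1 1))"
proof (rule ctri_iso_gc_compI[where \<psi> = \<psi> and R = R])
  have mem: "(1,1) \<notin> GC11_ch0" "(1,1) \<in> GC11_ch1" "(1,1) \<in> GC11_ch2"
    "(0,3/2) \<notin> GC11_ch0" "(0,3/2) \<notin> GC11_ch1" "(0,3/2) \<in> GC11_ch2"
    "(0,0) \<in> GC11_ch0" "(0,0) \<notin> GC11_ch1" "(0,0) \<notin> GC11_ch2"
    by (simp_all add: GC11_ch0_def GC11_ch1_def GC11_ch2_def)
  have k3: "k = 0 \<or> k = 1 \<or> k = 2" if "k < 3" for k :: nat
    using that by auto
  show "\<exists>C\<in>chambers (GC 1 1). corner (GC 1 1) k \<in> C" if "k < 3" for k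
    using k3[OF that] mem unfolding chambers_GC11 by (auto simp: corner_GC11 simp del: One_nat_def)
  show "\<psi> C (corner Op (colour (GC 1 1) (corner (GC 1 1) k))) = corner A k
      \<and> R (corner Op (colour (GC 1 1) (corner (GC 1 1) k)))"
    if "k < 3" "C \<in> chambers (GC 1 1)" "corner (GC 1 1) k \<in> C" for k C
    using k3[OF that(1)] that(2,3) mem corners unfolding chambers_GC11
    by (auto simp: corner_GC11 GC_simps(2) BH_colour_GC11_points simp del: One_nat_def)
  show "\<psi> C p = \<psi> C' q \<longleftrightarrow> glue_rel Op (GC 1 1) (C, p) (C', q)"
    if "C \<in> chambers (GC 1 1)" "C' \<in> chambers (GC 1 1)" "R p" "R q" for C C' p q
    unfolding inj[OF that] glue_rel_GC11_iff[OF that(1,2) carrier] ..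
qed (fact region chambers colour)+

section \<open>The two decompositions\<close>

lemma BH_region_chambers_eq_images:
  assumes aut: "\<And>C. C \<in> I \<Longrightarrow> \<exists>g. BH_aut (\<psi> C) g"
    and maps: "\<And>C p. C \<in> I \<Longrightarrow> R p \<Longrightarrow> S (\<psi> C p)"
    and covers: "\<And>D. D \<in> BH_chambers \<Longrightarrow> \<forall>p\<in>D. S p \<Longrightarrow> \<exists>C\<in>I. \<exists>T. D = \<psi> C ` T \<and> (\<forall>p\<in>T. R p)"
  shows "{D \<in> BH_chambers. \<forall>p\<in>D. S p} = {\<psi> C ` T | C T. C \<in> I \<and> T \<in> {T \<in> BH_chambers. \<forall>p\<in>T. R p}}"
proof (intro equalityI subsetI)
  fix D assume "D \<in> {D \<in> BH_chambers. \<forall>p\<in>D. S p}"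
  then obtain C T where D: "D \<in> BH_chambers" "C \<in> I" "D = \<psi> C ` T" "\<forall>p\<in>T. R p"
    using covers by blast
  obtain g where g: "BH_aut (\<psi> C) g" using aut[OF D(2)] by blast
  have "T = g ` D"
    using BH_aut_image_image[OF BH_aut_sym[OF g]] unfolding D(3) by simp
  then have "T \<in> BH_chambers"
    using BH_hom_chamber g D(1) unfolding BH_aut_def by blast
  then show "D \<in> {\<psi> C ` T | C T. C \<in> I \<and> T \<in> {T \<in> BH_chambers. \<forall>p\<in>T. R p}}"
    using D by blast
next
  fix D assume "D \<in> {\<psi> C ` T | C T. C \<in> I \<and> T \<in> {T \<in> BH_chambers. \<forall>p\<in>T. R p}}"
  then obtain C T where D: "D = \<psi> C ` T" "C \<in> I" "T \<in> BH_chambers" "\<forall>p\<in>T. R p"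
    by blast
  obtain g where "BH_aut (\<psi> C) g" using aut[OF D(2)] by blast
  then have "D \<in> BH_chambers"
    using BH_hom_chamber D(1,3) unfolding BH_aut_def by blast
  then show "D \<in> {D \<in> BH_chambers. \<forall>p\<in>D. S p}"
    using D maps by blast
qed

(* The copy of GC(l,0) glued into the chamber C of GC(1,1), as a part of GC(l,l). *)
definition embed_l0 :: "nat \<Rightarrow> (real \<times> real) set \<Rightarrow> real \<times> real \<Rightarrow> real \<times> real" where
  "embed_l0 l C =
    (if C = GC11_ch0 then int_affine 0 1 1 0 0 0
     else if C = GC11_ch1 then int_affine (-1) 0 0 (-1) l l
     else int_affine (-1) (-1) 0 1 l l)"

lemma embed_l0_simps:
  "embed_l0 l GC11_ch0 p = (snd p, fst p)"
  "embed_l0 l GC11_ch1 p = (l - fst p, l - snd p)"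
  "embed_l0 l GC11_ch2 p = (l - fst p - snd p, l + snd p)"
  by (simp_all add: embed_l0_def int_affine_def GC11_chs_distinct GC11_chs_distinct[THEN not_sym])

lemma BH_aut_embed_l0:
  "BH_aut (embed_l0 l GC11_ch0) (embed_l0 l GC11_ch0)"
  "BH_aut (embed_l0 l GC11_ch1) (embed_l0 l GC11_ch1)"
  "BH_aut (embed_l0 l GC11_ch2) (int_affine (-1) (-1) 0 1 (2 * int l) (- int l))"
proof -
  have hom: "BH_hom (int_affine 0 1 1 0 0 0)" "BH_hom (int_affine (-1) 0 0 (-1) l l)"
    "BH_hom (int_affine (-1) (-1) 0 1 l l)" "BH_hom (int_affine (-1) (-1) 0 1 (2 * int l) (- int l))"
    by (rule BH_hom_int_affine; simp add: hex_dirs_def)+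
  have eq: "embed_l0 l GC11_ch0 = int_affine 0 1 1 0 0 0"
    "embed_l0 l GC11_ch1 = int_affine (-1) 0 0 (-1) l l"
    "embed_l0 l GC11_ch2 = int_affine (-1) (-1) 0 1 l l"
    by (simp_all add: embed_l0_def GC11_chs_distinct GC11_chs_distinct[THEN not_sym])
  show "BH_aut (embed_l0 l GC11_ch0) (embed_l0 l GC11_ch0)"
    using hom(1) unfolding BH_aut_def eq by (simp add: int_affine_def)
  show "BH_aut (embed_l0 l GC11_ch1) (embed_l0 l GC11_ch1)"
    using hom(2) unfolding BH_aut_def eq by (simp add: int_affine_def)
  show "BH_aut (embed_l0 l GC11_ch2) (int_affine (-1) (-1) 0 1 (2 * int l) (- int l))"
    using hom(3,4) unfolding BH_aut_def eq by (simp add: int_affine_def)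
qed

lemma embed_l0_eq_iff:
  assumes "C \<in> chambers (GC 1 1)" "C' \<in> chambers (GC 1 1)" "tri_l0 l p" "tri_l0 l q"
  shows "embed_l0 l C p = embed_l0 l C' q \<longleftrightarrow> p = q
    \<and> (0 < snd p \<longrightarrow> (C = GC11_ch2 \<longleftrightarrow> C' = GC11_ch2))
    \<and> (fst p + snd p < l \<longrightarrow> (C = GC11_ch0 \<longleftrightarrow> C' = GC11_ch0))"
  using assms unfolding chambers_GC11 tri_l0_def
  by (elim insertE emptyE; auto simp: embed_l0_simps prod_eq_iff GC11_chs_distinct GC11_chs_distinct[THEN not_sym])

lemma GC_ll_chamber_cover:
  assumes D: "D \<in> BH_chambers" "\<forall>p\<in>D. tri_ll l p"
  shows "\<exists>C\<in>chambers (GC 1 1). \<exists>T. D = embed_l0 l C ` T \<and> (\<forall>p\<in>T. tri_l0 l p)"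
proof -
  have "(\<forall>p\<in>D. fst p + snd p \<le> l) \<or> (\<forall>p\<in>D. l \<le> fst p + snd p)"
    using BH_chamber_not_crossing[OF D(1), of 1 1 "int l"] by simp
  moreover have "(\<forall>p\<in>D. snd p \<le> l) \<or> (\<forall>p\<in>D. l \<le> snd p)"
    using BH_chamber_not_crossing[OF D(1), of 0 1 "int l"] by simp
  ultimately consider "\<forall>p\<in>D. fst p + snd p \<le> l"
    | "\<forall>p\<in>D. l \<le> fst p + snd p" "\<forall>p\<in>D. snd p \<le> l"
    | "\<forall>p\<in>D. l \<le> snd p"
    by blast
  then show ?thesis
  proof cases
    case 1
    then show ?thesis
      using D(2) BH_aut_image_image[OF BH_aut_embed_l0(1)] unfolding chambers_GC11
      by (intro bexI[of _ GC11_ch0] exI[of _ "embed_l0 l GC11_ch0 ` D"])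
        (auto simp: embed_l0_simps tri_l0_def tri_ll_def)
  next
    case 2
    then show ?thesis
      using D(2) BH_aut_image_image[OF BH_aut_embed_l0(2)] unfolding chambers_GC11
      by (intro bexI[of _ GC11_ch1] exI[of _ "embed_l0 l GC11_ch1 ` D"])
        (auto simp: embed_l0_simps tri_l0_def tri_ll_def)
  next
    case 3
    then show ?thesis
      using D(2) BH_aut_image_image[OF BH_aut_embed_l0(3)] unfolding chambers_GC11
      by (intro bexI[of _ GC11_ch2] exI[of _ "int_affine (-1) (-1) 0 1 (2 * int l) (- int l) ` D"])
        (auto simp: int_affine_def tri_l0_def tri_ll_def)
  qed
qed

lemma GC_ll_chambers:
  assumes "l \<ge> 1"
  shows "chambers (GC l l) = {embed_l0 l C ` T | C T. C \<in> chambers (GC 1 1) \<and> T \<in> chambers (GC l 0)}"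
  unfolding chambers_GC_ll[OF assms] chambers_GC_l0[OF assms]
proof (rule BH_region_chambers_eq_images)
  show "\<exists>g. BH_aut (embed_l0 l C) g" if "C \<in> chambers (GC 1 1)" for C
    using that BH_aut_embed_l0 unfolding chambers_GC11 by blast
  show "tri_ll l (embed_l0 l C p)" if "C \<in> chambers (GC 1 1)" "tri_l0 l p" for C p
    using that unfolding chambers_GC11 by (auto simp: embed_l0_simps tri_l0_def tri_ll_def)
qed (rule GC_ll_chamber_cover)

lemma GC_ll_iso_comp:
  assumes "l \<ge> 1"
  shows "ctri_iso (GC l l) (gc_comp (GC l 0) (GC 1 1))"
proof (rule ctri_iso_gc_comp_GC11I[where \<psi> = "embed_l0 l" and R = "tri_l0 l"])
  show "tri_l0 l p" if "T \<in> chambers (GC l 0)" "p \<in> T" for T p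
    using that chambers_GC_l0[OF assms] by blast
  show "embed_l0 l C p = embed_l0 l C' q \<longleftrightarrow> p = q
      \<and> (1 \<in> carrier (GC l 0) p \<longrightarrow> (C = GC11_ch2 \<longleftrightarrow> C' = GC11_ch2))
      \<and> (2 \<in> carrier (GC l 0) p \<longrightarrow> (C = GC11_ch0 \<longleftrightarrow> C' = GC11_ch0))"
    if "C \<in> chambers (GC 1 1)" "C' \<in> chambers (GC 1 1)" "tri_l0 l p" "tri_l0 l q" for C C' p q
    using embed_l0_eq_iff[OF that] carrier_GC_l0[OF assms that(3)] by simp
  show "colour (GC l l) (embed_l0 l C p) = colour (GC l 0) p" if "C \<in> chambers (GC 1 1)" for C p
    using that BH_aut_embed_l0 BH_aut_colour unfolding chambers_GC11 GC_simps(2) by blast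
qed (fact carrier_GC_subset GC_ll_chambers[OF assms]
    | simp add: embed_l0_simps GC_simps(3) GC_corner_def tri_l0_def)+

(* The copy of GC(k,k) glued into the chamber C of GC(1,1), as a part of GC(3k,0). *)
definition embed_kk :: "nat \<Rightarrow> (real \<times> real) set \<Rightarrow> real \<times> real \<Rightarrow> real \<times> real" where
  "embed_kk k C =
    (if C = GC11_ch0 then int_affine 0 1 1 0 0 0
     else if C = GC11_ch1 then int_affine (-1) (-1) 1 0 (3 * int k) 0
     else int_affine (-1) (-1) 0 1 (3 * int k) 0)"

lemma embed_kk_simps:
  "embed_kk k GC11_ch0 p = (snd p, fst p)"
  "embed_kk k GC11_ch1 p = (3 * k - fst p - snd p, fst p)"
  "embed_kk k GC11_ch2 p = (3 * k - fst p - snd p, snd p)"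
  by (simp_all add: embed_kk_def int_affine_def GC11_chs_distinct GC11_chs_distinct[THEN not_sym])

lemma BH_aut_embed_kk:
  "BH_aut (embed_kk k GC11_ch0) (embed_kk k GC11_ch0)"
  "BH_aut (embed_kk k GC11_ch1) (int_affine 0 1 (-1) (-1) 0 (3 * int k))"
  "BH_aut (embed_kk k GC11_ch2) (embed_kk k GC11_ch2)"
proof -
  have hom: "BH_hom (int_affine 0 1 1 0 0 0)" "BH_hom (int_affine (-1) (-1) 1 0 (3 * int k) 0)"
    "BH_hom (int_affine 0 1 (-1) (-1) 0 (3 * int k))" "BH_hom (int_affine (-1) (-1) 0 1 (3 * int k) 0)"
    by (rule BH_hom_int_affine; simp add: hex_dirs_def)+
  have eq: "embed_kk k GC11_ch0 = int_affine 0 1 1 0 0 0"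
    "embed_kk k GC11_ch1 = int_affine (-1) (-1) 1 0 (3 * int k) 0"
    "embed_kk k GC11_ch2 = int_affine (-1) (-1) 0 1 (3 * int k) 0"
    by (simp_all add: embed_kk_def GC11_chs_distinct GC11_chs_distinct[THEN not_sym])
  show "BH_aut (embed_kk k GC11_ch0) (embed_kk k GC11_ch0)"
    using hom(1) unfolding BH_aut_def eq by (simp add: int_affine_def)
  show "BH_aut (embed_kk k GC11_ch1) (int_affine 0 1 (-1) (-1) 0 (3 * int k))"
    using hom(2,3) unfolding BH_aut_def eq by (simp add: int_affine_def)
  show "BH_aut (embed_kk k GC11_ch2) (embed_kk k GC11_ch2)"
    using hom(4) unfolding BH_aut_def eq by (simp add: int_affine_def)
qed

lemma embed_kk_eq_iff:
  assumes "C \<in> chambers (GC 1 1)" "C' \<in> chambers (GC 1 1)" "tri_ll k p" "tri_ll k q"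
  shows "embed_kk k C p = embed_kk k C' q \<longleftrightarrow> p = q
    \<and> (fst p < snd p \<longrightarrow> (C = GC11_ch2 \<longleftrightarrow> C' = GC11_ch2))
    \<and> (fst p + 2 * snd p < 3 * k \<longrightarrow> (C = GC11_ch0 \<longleftrightarrow> C' = GC11_ch0))"
  using assms unfolding chambers_GC11 tri_ll_def
  by (elim insertE emptyE; auto simp: embed_kk_simps prod_eq_iff GC11_chs_distinct GC11_chs_distinct[THEN not_sym])

lemma GC_3k0_chamber_cover:
  assumes D: "D \<in> BH_chambers" "\<forall>p\<in>D. tri_l0 (real (3 * k)) p"
  shows "\<exists>C\<in>chambers (GC 1 1). \<exists>T. D = embed_kk k C ` T \<and> (\<forall>p\<in>T. tri_ll k p)"
proof -
  have "(\<forall>p\<in>D. 2 * fst p + snd p \<le> 3 * k) \<or> (\<forall>p\<in>D. 3 * k \<le> 2 * fst p + snd p)"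
    using BH_chamber_not_crossing[OF D(1), of 2 1 "3 * int k"] by simp
  moreover have "(\<forall>p\<in>D. fst p + 2 * snd p \<le> 3 * k) \<or> (\<forall>p\<in>D. 3 * k \<le> fst p + 2 * snd p)"
    using BH_chamber_not_crossing[OF D(1), of 1 2 "3 * int k"] by simp
  ultimately consider "\<forall>p\<in>D. 2 * fst p + snd p \<le> 3 * k"
    | "\<forall>p\<in>D. 3 * k \<le> 2 * fst p + snd p" "\<forall>p\<in>D. fst p + 2 * snd p \<le> 3 * k"
    | "\<forall>p\<in>D. 3 * k \<le> fst p + 2 * snd p"
    by blast
  then show ?thesis
  proof cases
    case 1
    then show ?thesis
      using D(2) BH_aut_image_image[OF BH_aut_embed_kk(1)] unfolding chambers_GC11
      by (intro bexI[of _ GC11_ch0] exI[of _ "embed_kk k GC11_ch0 ` D"])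
        (auto simp: embed_kk_simps tri_l0_def tri_ll_def)
  next
    case 2
    then show ?thesis
      using D(2) BH_aut_image_image[OF BH_aut_embed_kk(2)] unfolding chambers_GC11
      by (intro bexI[of _ GC11_ch1] exI[of _ "int_affine 0 1 (-1) (-1) 0 (3 * int k) ` D"])
        (auto simp: int_affine_def tri_l0_def tri_ll_def)
  next
    case 3
    then show ?thesis
      using D(2) BH_aut_image_image[OF BH_aut_embed_kk(3)] unfolding chambers_GC11
      by (intro bexI[of _ GC11_ch2] exI[of _ "embed_kk k GC11_ch2 ` D"])
        (auto simp: embed_kk_simps tri_l0_def tri_ll_def)
  qed
qed

lemma GC_3k0_chambers:
  assumes "k \<ge> 1"
  shows "chambers (GC (3 * k) 0) = {embed_kk k C ` T | C T. C \<in> chambers (GC 1 1) \<and> T \<in> chambers (GC k k)}"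
proof -
  have "3 * k \<ge> 1" using assms by simp
  show ?thesis
    unfolding chambers_GC_l0[OF \<open>3 * k \<ge> 1\<close>] chambers_GC_ll[OF assms]
  proof (rule BH_region_chambers_eq_images)
    show "\<exists>g. BH_aut (embed_kk k C) g" if "C \<in> chambers (GC 1 1)" for C
      using that BH_aut_embed_kk unfolding chambers_GC11 by blast
    show "tri_l0 (real (3 * k)) (embed_kk k C p)" if "C \<in> chambers (GC 1 1)" "tri_ll k p" for C p
      using that unfolding chambers_GC11 by (auto simp: embed_kk_simps tri_l0_def tri_ll_def)
  qed (rule GC_3k0_chamber_cover)
qed

lemma GC_3k0_iso_comp:
  assumes "k \<ge> 1"
  shows "ctri_iso (GC (3 * k) 0) (gc_comp (GC k k) (GC 1 1))"
proof (rule ctri_iso_gc_comp_GC11I[where \<psi> = "embed_kk k" and R = "tri_ll k"])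
  show "tri_ll k p" if "T \<in> chambers (GC k k)" "p \<in> T" for T p
    using that chambers_GC_ll[OF assms] by blast
  show "embed_kk k C p = embed_kk k C' q \<longleftrightarrow> p = q
      \<and> (1 \<in> carrier (GC k k) p \<longrightarrow> (C = GC11_ch2 \<longleftrightarrow> C' = GC11_ch2))
      \<and> (2 \<in> carrier (GC k k) p \<longrightarrow> (C = GC11_ch0 \<longleftrightarrow> C' = GC11_ch0))"
    if "C \<in> chambers (GC 1 1)" "C' \<in> chambers (GC 1 1)" "tri_ll k p" "tri_ll k q" for C C' p q
    using embed_kk_eq_iff[OF that] carrier_GC_ll[OF assms that(3)] by simp
  show "colour (GC (3 * k) 0) (embed_kk k C p) = colour (GC k k) p" if "C \<in> chambers (GC 1 1)" for C p
    using that BH_aut_embed_kk BH_aut_colour unfolding chambers_GC11 GC_simps(2) by blast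
qed (fact carrier_GC_subset GC_3k0_chambers[OF assms]
    | simp add: embed_kk_simps GC_simps(3) GC_corner_def tri_ll_def)+

lemma three_dvd_if_corner_colour_GC_l0:
  assumes "colour (GC l 0) (corner (GC l 0) 0) = 2"
  shows "3 dvd l"
proof -
  have "face_ctr (of_int (int l), of_int 0)"
    using assms by (simp add: GC_simps GC_corner_def BH_colour_def split: if_splits)
  then show ?thesis
    unfolding face_ctr_of_int_iff by presburger
qed

theorem lemma11:
  shows "(\<forall>l::nat. l \<ge> 1 \<longrightarrow> colour (GC l 0) (corner (GC l 0) 0) = 2 \<longrightarrow>
            (\<exists>k::nat. k \<ge> 1 \<and> l = 3 * k \<and> ctri_iso (GC (3 * k) 0) (gc_comp (GC k k) (GC 1 1))))
       \<and> (\<forall>l::nat. l \<ge> 1 \<longrightarrow> ctri_iso (GC l l) (gc_comp (GC l 0) (GC 1 1)))"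
proof (intro conjI allI impI)
  fix l :: nat assume l: "l \<ge> 1" and v0: "colour (GC l 0) (corner (GC l 0) 0) = 2"
  obtain k where lk: "l = 3 * k"
    using three_dvd_if_corner_colour_GC_l0[OF v0] by blast
  with l have "k \<ge> 1" by simp
  with lk show "\<exists>k. k \<ge> 1 \<and> l = 3 * k \<and> ctri_iso (GC (3 * k) 0) (gc_comp (GC k k) (GC 1 1))"
    using GC_3k0_iso_comp by blast
next
  fix l :: nat assume "l \<ge> 1"
  then show "ctri_iso (GC l l) (gc_comp (GC l 0) (GC 1 1))"
    by (rule GC_ll_iso_comp)
qed

end
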